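(* Let $X$ be a normal Hausdorff topological space, $\Phi$ a local semiflow on $X$, $\mathscr A$ an attractor of $\Phi$, and $A$ an attractor of $\Phi$ in $\mathscr A$, with dual repeller $A^*=\mathscr A\setminus\Omega_{\mathscr A}(A)$. Let $\gamma:\mathbb R\to\mathscr A$ be a full solution with $\gamma(0)=x\in\mathscr A$. Then: (1) if $\omega(\gamma)\cap A^*\ne\emptyset$, then $\gamma(\mathbb R)\subset A^*$; (2) if $\alpha(\gamma)\cap\overline A^{\mathscr A}\ne\emptyset$, then $\gamma(\mathbb R)\subset A$, where $\overline A^{\mathscr A}$ is the closure of $A$ in $\mathscr A$; (3) if $x\in\mathscr A\setminus(A\cup A^* )$, then $\alpha(\gamma)\subset A^*$ and $\omega(\gamma)\subset A$.
   Context: A local semiflow $\Phi$ on $X$ is a continuous map from an open subset $\mathcal D_\Phi\subset\mathbb R^+\times X$ to $X$ such that: (i) for each $x$ there is $T_x\in(0,\infty]$ with $(t,x)\in\mathcal D_\Phi$ iff $t\in[0,T_x)$; (ii) $\Phi(0,x)=x$; (iii) if $(t+s,x)\in\mathcal D_\Phi$ with $t,s\ge0$ then $\Phi(t+s,x)=\Phi(t,\Phi(s,x))$. Write $\Phi(t)x=\Phi(t,x)$, $\Phi(J)M=\{\Phi(t)x:x\in M,\ t\in J\cap[0,T_x)\}$, $\Phi(t)M=\Phi(\{t\})M$. A full solution is $\gamma:\mathbb R\to X$ with $\gamma(t)=\Phi(t-s)\gamma(s)$ for all $s\le t$. $\omega(\gamma)=\{y:\exists t_n\to\infty,\ \gamma(t_n)\to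 y\}$, $\alpha(\gamma)=\{y:\exists t_n\to-\infty,\ \gamma(t_n)\to y\}$. Convention: $U$ is a neighborhood of $A$ (in a given space) if the closure of $A$ is contained in the interior of $U$. A set $K$ is invariant if $\Phi(t)K\subset K$ and $K\subset\Phi(t)K$ for all $t\ge0$. $K$ attracts $B$ if $T_x=\infty$ for all $x\in B$ and for every neighborhood $V$ of $K$ there is $t_0>0$ with $\Phi(t)B\subset V$ for all $t>t_0$. A set is s-compact if every sequence in it has a subsequence converging to a point of the set. An attractor is a nonempty s-compact invariant set $\mathscr A$ for which there is a neighborhood $N$ of $\mathscr A$ such that $\mathscr A$ attracts $N$ and every s-compact invariant subset of $N$ is contained in $\mathscr A$. The restriction $\Phi|_{\mathscr A}$ is a global semiflow on $\mathscr A$ (subspace topology); an attractor of $\Phi$ in $\mathscr A$ is an attractor of $\Phi|_{\mathscr A}$ with all topological notions taken in $\mathscr A$, and $\Omega_{\mathscr A}(A)=\{x\in\mathscr A: A \text{ attracts } \{x\} \text{ under } \Phi|_{\mathscr A}\}$ is its region of attraction in $\mathscr A$. *)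

theory Defs
  imports "HOL-Analysis.Analysis"
begin

text \<open>A local semiflow on the space X is represented by its domain
  D \<subseteq> [0,\<infinity>) \<times> X and the map Phi (meaningful on D).\<close>

definition local_semiflow ::
  "'a topology \<Rightarrow> (real \<times> 'a) set \<Rightarrow> (real \<Rightarrow> 'a \<Rightarrow> 'a) \<Rightarrow> bool" where
  "local_semiflow X D Phi \<longleftrightarrow>
     D \<subseteq> {0..} \<times> topspace X \<and>
     openin (prod_topology (top_of_set {0::real..}) X) D \<and>
     continuous_map (subtopology (prod_topology euclideanreal X) D) X (\<lambda>(t, x). Phi t x) \<and>
     (\<forall>x\<in>topspace X. \<exists>T::ereal. T > 0 \<and> (\<forall>t. (t, x) \<in> D \<longleftrightarrow> 0 \<le> t \<and> ereal t < T)) \<and>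
     (\<forall>x\<in>topspace X. Phi 0 x = x) \<and>
     (\<forall>x t s. 0 \<le> t \<and> 0 \<le> s \<and> (t + s, x) \<in> D \<longrightarrow>
        (s, x) \<in> D \<and> (t, Phi s x) \<in> D \<and> Phi (t + s) x = Phi t (Phi s x))"

definition sf_image ::
  "(real \<times> 'a) set \<Rightarrow> (real \<Rightarrow> 'a \<Rightarrow> 'a) \<Rightarrow> real set \<Rightarrow> 'a set \<Rightarrow> 'a set" where
  "sf_image D Phi J M = {Phi t x | t x. x \<in> M \<and> t \<in> J \<and> (t, x) \<in> D}"

definition nbhd_of :: "'a topology \<Rightarrow> 'a set \<Rightarrow> 'a set \<Rightarrow> bool" where
  "nbhd_of T U A \<longleftrightarrow> U \<subseteq> topspace T \<and> T closure_of A \<subseteq> T interior_of U"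

definition sf_invariant ::
  "(real \<times> 'a) set \<Rightarrow> (real \<Rightarrow> 'a \<Rightarrow> 'a) \<Rightarrow> 'a set \<Rightarrow> bool" where
  "sf_invariant D Phi K \<longleftrightarrow>
     (\<forall>t\<ge>0. sf_image D Phi {t} K \<subseteq> K \<and> K \<subseteq> sf_image D Phi {t} K)"

definition sf_attracts ::
  "'a topology \<Rightarrow> (real \<times> 'a) set \<Rightarrow> (real \<Rightarrow> 'a \<Rightarrow> 'a) \<Rightarrow> 'a set \<Rightarrow> 'a set \<Rightarrow> bool" where
  "sf_attracts T D Phi K B \<longleftrightarrow>
     (\<forall>x\<in>B. \<forall>t\<ge>0. (t, x) \<in> D) \<and>
     (\<forall>V. nbhd_of T V K \<longrightarrow> (\<exists>t0>0. \<forall>t>t0. sf_image D Phi {t} B \<subseteq> V))"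

definition s_compact :: "'a topology \<Rightarrow> 'a set \<Rightarrow> bool" where
  "s_compact T S \<longleftrightarrow>
     (\<forall>u::nat \<Rightarrow> 'a. (\<forall>n. u n \<in> S) \<longrightarrow>
        (\<exists>r y. strict_mono r \<and> y \<in> S \<and> limitin T (u \<circ> r) y sequentially))"

definition sf_attractor ::
  "'a topology \<Rightarrow> (real \<times> 'a) set \<Rightarrow> (real \<Rightarrow> 'a \<Rightarrow> 'a) \<Rightarrow> 'a set \<Rightarrow> bool" where
  "sf_attractor T D Phi A \<longleftrightarrow>
     A \<noteq> {} \<and> s_compact T A \<and> sf_invariant D Phi A \<and>
     (\<exists>N. nbhd_of T N A \<and> sf_attracts T D Phi A N \<and>
        (\<forall>K. K \<subseteq> N \<and> s_compact T K \<and> sf_invariant D Phi K \<longrightarrow> K \<subseteq> A))"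

definition sf_restrict :: "(real \<times> 'a) set \<Rightarrow> 'a set \<Rightarrow> (real \<times> 'a) set" where
  "sf_restrict D S = D \<inter> (UNIV \<times> S)"

definition sf_attractor_in ::
  "'a topology \<Rightarrow> (real \<times> 'a) set \<Rightarrow> (real \<Rightarrow> 'a \<Rightarrow> 'a) \<Rightarrow> 'a set \<Rightarrow> 'a set \<Rightarrow> bool" where
  "sf_attractor_in X D Phi S A \<longleftrightarrow> sf_attractor (subtopology X S) (sf_restrict D S) Phi A"

definition region_of_attraction_in ::
  "'a topology \<Rightarrow> (real \<times> 'a) set \<Rightarrow> (real \<Rightarrow> 'a \<Rightarrow> 'a) \<Rightarrow> 'a set \<Rightarrow> 'a set \<Rightarrow> 'a set" where
  "region_of_attraction_in X D Phi S A =
     {x \<in> S. sf_attracts (subtopology X S) (sf_restrict D S) Phi A {x}}"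

definition full_solution ::
  "'a topology \<Rightarrow> (real \<times> 'a) set \<Rightarrow> (real \<Rightarrow> 'a \<Rightarrow> 'a) \<Rightarrow> (real \<Rightarrow> 'a) \<Rightarrow> bool" where
  "full_solution X D Phi \<gamma> \<longleftrightarrow>
     (\<forall>t. \<gamma> t \<in> topspace X) \<and>
     (\<forall>s t. s \<le> t \<longrightarrow> (t - s, \<gamma> s) \<in> D \<and> \<gamma> t = Phi (t - s) (\<gamma> s))"

definition omega_limit :: "'a topology \<Rightarrow> (real \<Rightarrow> 'a) \<Rightarrow> 'a set" where
  "omega_limit X \<gamma> = {y. \<exists>tn::nat \<Rightarrow> real. filterlim tn at_top sequentially \<and>
                           limitin X (\<gamma> \<circ> tn) y sequentially}"

definition alpha_limit :: "'a topology \<Rightarrow> (real \<Rightarrow> 'a) \<Rightarrow> 'a set" where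
  "alpha_limit X \<gamma> = {y. \<exists>tn::nat \<Rightarrow> real. filterlim tn at_bot sequentially \<and>
                           limitin X (\<gamma> \<circ> tn) y sequentially}"

end

theory Submission
  imports Defs
begin

(* Restricted to the attractor \<A>, the semiflow is global on a sequentially compact, regular
   Hausdorff space. In it, the largest invariant subset of the closed forward-invariant set
   cl A is again sequentially compact and lies in the neighbourhood N of A, so by maximality of
   the attractor it is contained in A; it contains every backward-invariant subset of cl A, such
   as an omega-limit set or the range of a full solution. A solution entering the region of
   attraction has its omega-limit set in cl A, since points outside cl A can be separated from it
   by open sets. If the alpha-limit set meets the region of attraction, the solution returns to N
   at arbitrarily negative times, so its range lies in cl A and hence in A. As cl A is contained
   in N and thus in the region of attraction, the three claims follow. *)

lemma s_compact_subset_topspace: "s_compact T S \<Longrightarrow> S \<subseteq> topspace T"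
proof
  fix z assume S: "s_compact T S" and "z \<in> S"
  then obtain r y where "limitin T ((\<lambda>n. z) \<circ> r) y sequentially"
    using S[unfolded s_compact_def, rule_format, of "\<lambda>n. z"] by auto
  then have "eventually (\<lambda>n. z \<in> topspace T) sequentially"
    unfolding limitin_def o_def by (meson openin_topspace)
  then show "z \<in> topspace T" by simp
qed

lemma s_compact_closedin_subset:
  assumes "s_compact T S" "closedin T C" "C \<subseteq> S"
  shows "s_compact T C"
  unfolding s_compact_def
proof (intro allI impI)
  fix u :: "nat \<Rightarrow> 'a" assume u: "\<forall>n. u n \<in> C"
  then have "\<forall>n. u n \<in> S" using assms(3) by blast
  then obtain r y where r: "strict_mono r" "limitin T (u \<circ> r) y sequentially"
    using assms(1)[unfolded s_compact_def, rule_format] by blast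
  moreover have "y \<in> C"
    using limitin_closedin[OF r(2) assms(2)] u by simp
  ultimately show "\<exists>r y. strict_mono r \<and> y \<in> C \<and> limitin T (u \<circ> r) y sequentially"
    by blast
qed

lemma limitin_s_compact_mem:
  assumes "Hausdorff_space X" "s_compact X S" "limitin X f y sequentially" "\<And>n. f n \<in> S"
  shows "y \<in> S"
proof -
  obtain r y' where r: "strict_mono r" "y' \<in> S" "limitin X (f \<circ> r) y' sequentially"
    using assms(2)[unfolded s_compact_def, rule_format, of f] assms(4) by blast
  have "y = y'"
    using limitin_Hausdorff_unique[OF limitin_subsequence[OF r(1) assms(3)] r(3)] assms(1)
    by simp
  then show ?thesis using r(2) by simp
qed

lemma limitin_subtopology_s_compact:
  assumes "Hausdorff_space X" "s_compact X S" "\<And>n. f n \<in> S"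
  shows "limitin (subtopology X S) f y sequentially \<longleftrightarrow> limitin X f y sequentially"
  using limitin_s_compact_mem[OF assms(1,2) _ assms(3)] assms(3)
  by (auto simp: limitin_subtopology)

lemma s_compact_subtopology_self:
  assumes "Hausdorff_space X" "s_compact X S"
  shows "s_compact (subtopology X S) S"
  unfolding s_compact_def
proof (intro allI impI)
  fix u :: "nat \<Rightarrow> 'a" assume u: "\<forall>n. u n \<in> S"
  then obtain r y where "strict_mono r" "y \<in> S" "limitin X (u \<circ> r) y sequentially"
    using assms(2)[unfolded s_compact_def, rule_format] by blast
  with u show "\<exists>r y. strict_mono r \<and> y \<in> S \<and> limitin (subtopology X S) (u \<circ> r) y sequentially"
    using limitin_subtopology_s_compact[OF assms, of "u \<circ> r"] by auto
qed

lemma omega_limit_subtopology_s_compact: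
  assumes "Hausdorff_space X" "s_compact X S" "range \<gamma> \<subseteq> S"
  shows "omega_limit (subtopology X S) \<gamma> = omega_limit X \<gamma>"
proof -
  have "limitin (subtopology X S) (\<gamma> \<circ> tn) y sequentially \<longleftrightarrow> limitin X (\<gamma> \<circ> tn) y sequentially"
    for tn :: "nat \<Rightarrow> real" and y
    using assms(3) by (intro limitin_subtopology_s_compact[OF assms(1,2)]) auto
  then show ?thesis unfolding omega_limit_def by simp
qed

lemma alpha_limit_subtopology_s_compact:
  assumes "Hausdorff_space X" "s_compact X S" "range \<gamma> \<subseteq> S"
  shows "alpha_limit (subtopology X S) \<gamma> = alpha_limit X \<gamma>"
proof -
  have "limitin (subtopology X S) (\<gamma> \<circ> tn) y sequentially \<longleftrightarrow> limitin X (\<gamma> \<circ> tn) y sequentially"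
    for tn :: "nat \<Rightarrow> real" and y
    using assms(3) by (intro limitin_subtopology_s_compact[OF assms(1,2)]) auto
  then show ?thesis unfolding alpha_limit_def by simp
qed

lemma alpha_limit_subset_topspace: "alpha_limit X \<gamma> \<subseteq> topspace X"
  unfolding alpha_limit_def by (auto dest: limitin_topspace)

lemma sf_attractor_domain:
  assumes "sf_attractor X D Phi \<A>" "z \<in> \<A>" "0 \<le> t"
  shows "(t, z) \<in> D"
proof -
  obtain N where "s_compact X \<A>" "nbhd_of X N \<A>" and N: "sf_attracts X D Phi \<A> N"
    using assms(1) unfolding sf_attractor_def by blast
  then have "\<A> \<subseteq> N"
    using closure_of_subset[OF s_compact_subset_topspace] interior_of_subset[of X N]
    unfolding nbhd_of_def by blast
  with N assms(2,3) show ?thesis unfolding sf_attracts_def by blast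
qed

lemma sf_attractor_forward_invariant:
  assumes "sf_attractor X D Phi \<A>" "z \<in> \<A>" "0 \<le> t"
  shows "Phi t z \<in> \<A>"
proof -
  have "Phi t z \<in> sf_image D Phi {t} \<A>"
    unfolding sf_image_def using sf_attractor_domain[OF assms] assms(2) by blast
  then show ?thesis
    using assms(1,3) unfolding sf_attractor_def sf_invariant_def by blast
qed

lemma continuous_map_sf_attractor:
  assumes "local_semiflow X D Phi" "sf_attractor X D Phi \<A>" "0 \<le> t"
  shows "continuous_map (subtopology X \<A>) (subtopology X \<A>) (Phi t)"
proof -
  have flow: "continuous_map (subtopology (prod_topology euclideanreal X) D) X (\<lambda>(t, x). Phi t x)"
    using assms(1) unfolding local_semiflow_def by (elim conjE)
  have "continuous_map (subtopology X \<A>) (prod_topology euclideanreal X) (\<lambda>z. (t, z))"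
    by (intro continuous_map_pairedI continuous_map_const[THEN iffD2])
      (auto simp: continuous_map_from_subtopology)
  moreover have "(\<lambda>z. (t, z)) \<in> topspace (subtopology X \<A>) \<rightarrow> D"
    using sf_attractor_domain[OF assms(2) _ assms(3)] by auto
  ultimately have "continuous_map (subtopology X \<A>)
      (subtopology (prod_topology euclideanreal X) D) (\<lambda>z. (t, z))"
    by (simp add: continuous_map_in_subtopology)
  from continuous_map_compose[OF this flow]
  have "continuous_map (subtopology X \<A>) X (Phi t)" by (simp add: o_def)
  then show ?thesis
    using sf_attractor_forward_invariant[OF assms(2) _ assms(3)]
    by (auto simp: continuous_map_in_subtopology)
qed

lemma sf_image_mono: "M \<subseteq> M' \<Longrightarrow> sf_image D Phi J M \<subseteq> sf_image D Phi J M'"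
  unfolding sf_image_def by blast

lemma sf_attracts_subset:
  assumes "sf_attracts T D Phi K B" "B' \<subseteq> B"
  shows "sf_attracts T D Phi K B'"
  unfolding sf_attracts_def
proof (intro conjI allI impI)
  show "\<forall>x\<in>B'. \<forall>t\<ge>0. (t, x) \<in> D" using assms unfolding sf_attracts_def by blast
next
  fix V assume "nbhd_of T V K"
  then obtain t0 where "t0 > 0" "\<forall>t>t0. sf_image D Phi {t} B \<subseteq> V"
    using assms(1) unfolding sf_attracts_def by blast
  then show "\<exists>t0>0. \<forall>t>t0. sf_image D Phi {t} B' \<subseteq> V"
    using sf_image_mono[OF assms(2)] by blast
qed

lemma sf_attracts_eventually_in:
  assumes "sf_attracts T D Phi K B" "nbhd_of T V K"
  shows "\<exists>t0>0. \<forall>t>t0. \<forall>z\<in>B. Phi t z \<in> V"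
proof -
  obtain t0 where t0: "t0 > 0" "\<forall>t>t0. sf_image D Phi {t} B \<subseteq> V"
    using assms unfolding sf_attracts_def by blast
  have "Phi t z \<in> sf_image D Phi {t} B" if "t > t0" "z \<in> B" for t z
  proof -
    have "(t, z) \<in> D" using assms(1) that t0(1) unfolding sf_attracts_def by simp
    then show ?thesis unfolding sf_image_def using that(2) by blast
  qed
  with t0 show ?thesis by blast
qed

locale global_semiflow =
  fixes T :: "'a topology" and D :: "(real \<times> 'a) set" and Phi :: "real \<Rightarrow> 'a \<Rightarrow> 'a"
  assumes domain: "{0..} \<times> topspace T \<subseteq> D"
    and continuous: "\<And>t. 0 \<le> t \<Longrightarrow> continuous_map T T (Phi t)"
    and semigroup: "\<And>z s t. z \<in> topspace T \<Longrightarrow> 0 \<le> s \<Longrightarrow> 0 \<le> t \<Longrightarrow>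
      Phi (t + s) z = Phi t (Phi s z)"
    and Hausdorff: "Hausdorff_space T"
    and s_compact_space: "s_compact T (topspace T)"
begin

lemma flow_in_topspace: "z \<in> topspace T \<Longrightarrow> 0 \<le> t \<Longrightarrow> Phi t z \<in> topspace T"
  using continuous_map_image_subset_topspace[OF continuous] by blast

lemma flow_commute:
  "z \<in> topspace T \<Longrightarrow> 0 \<le> s \<Longrightarrow> 0 \<le> t \<Longrightarrow> Phi t (Phi s z) = Phi s (Phi t z)"
  by (metis add.commute semigroup)

lemma sf_image_eq:
  assumes "K \<subseteq> topspace T" "0 \<le> t"
  shows "sf_image D Phi {t} K = Phi t ` K"
proof -
  have "(t, x) \<in> D" if "x \<in> K" for x using domain assms that by auto
  then show ?thesis unfolding sf_image_def by auto
qed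

lemma sf_invariant_iff:
  "K \<subseteq> topspace T \<Longrightarrow> sf_invariant D Phi K \<longleftrightarrow> (\<forall>t\<ge>0. Phi t ` K = K)"
  by (auto simp: sf_invariant_def sf_image_eq)

lemma limitin_flow: "limitin T f l F \<Longrightarrow> 0 \<le> t \<Longrightarrow> limitin T (Phi t \<circ> f) (Phi t l) F"
  by (rule continuous_map_limit[OF continuous])

lemma full_solution_iff:
  "full_solution T D Phi \<gamma> \<longleftrightarrow>
    range \<gamma> \<subseteq> topspace T \<and> (\<forall>s t. s \<le> t \<longrightarrow> \<gamma> t = Phi (t - s) (\<gamma> s))"
  using domain unfolding full_solution_def by fastforce

lemma flow_image_closed_under_limits:
  assumes "closedin T C" "0 \<le> s" "\<And>n. y n \<in> Phi s ` C" "limitin T y l sequentially"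
  shows "l \<in> Phi s ` C"
proof -
  have "\<forall>n. \<exists>c. c \<in> C \<and> y n = Phi s c" using assms(3) by blast
  then obtain w where w: "\<And>n. w n \<in> C" "\<And>n. y n = Phi s (w n)"
    by (metis (mono_tags))
  have "s_compact T C"
    using s_compact_closedin_subset[OF s_compact_space assms(1) closedin_subset[OF assms(1)]] .
  then obtain r c where r: "strict_mono r" "c \<in> C" "limitin T (w \<circ> r) c sequentially"
    using \<open>s_compact T C\<close>[unfolded s_compact_def, rule_format, of w] w(1) by blast
  have "Phi s \<circ> (w \<circ> r) = y \<circ> r" using w(2) by auto
  then have "limitin T (y \<circ> r) (Phi s c) sequentially"
    using limitin_flow[OF r(3) assms(2)] by simp
  then have "l = Phi s c"
    using limitin_Hausdorff_unique[OF limitin_subsequence[OF r(1) assms(4)]] Hausdorff by simp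
  then show ?thesis using r(2) by blast
qed

lemma omega_limit_backward_invariant:
  assumes "full_solution T D Phi \<gamma>" "y \<in> omega_limit T \<gamma>" "0 \<le> t"
  shows "\<exists>u\<in>omega_limit T \<gamma>. Phi t u = y"
proof -
  have \<gamma>: "range \<gamma> \<subseteq> topspace T" "\<And>s t. s \<le> t \<Longrightarrow> \<gamma> t = Phi (t - s) (\<gamma> s)"
    using assms(1) unfolding full_solution_iff by auto
  obtain tn where tn: "filterlim tn at_top sequentially" "limitin T (\<gamma> \<circ> tn) y sequentially"
    using assms(2) unfolding omega_limit_def by blast
  define g where "g n = \<gamma> (tn n - t)" for n
  have "\<forall>n. g n \<in> topspace T" using \<gamma>(1) unfolding g_def by auto
  then obtain r u where r: "strict_mono r" "limitin T (g \<circ> r) u sequentially"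
    using s_compact_space[unfolded s_compact_def, rule_format, of g] by blast
  have "filterlim (\<lambda>n. tn (r n)) at_top sequentially"
    using filterlim_compose[OF tn(1) filterlim_subseq[OF r(1)]] by (simp add: o_def)
  then have lim_time: "filterlim (\<lambda>n. tn (r n) - t) at_top sequentially"
    using filterlim_tendsto_add_at_top[OF tendsto_const[of "- t"]] by simp
  have "g \<circ> r = \<gamma> \<circ> (\<lambda>n. tn (r n) - t)" unfolding g_def by auto
  then have "u \<in> omega_limit T \<gamma>"
    unfolding omega_limit_def using lim_time r(2) by (intro CollectI exI[of _ "\<lambda>n. tn (r n) - t"]) simp
  moreover have "Phi t \<circ> (g \<circ> r) = (\<gamma> \<circ> tn) \<circ> r"
  proof
    fix n
    show "(Phi t \<circ> (g \<circ> r)) n = ((\<gamma> \<circ> tn) \<circ> r) n"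
      using \<gamma>(2)[of "tn (r n) - t" "tn (r n)"] assms(3) by (simp add: g_def)
  qed
  then have "limitin T (Phi t \<circ> (g \<circ> r)) y sequentially"
    using limitin_subsequence[OF r(1) tn(2)] by simp
  then have "Phi t u = y"
    using limitin_Hausdorff_unique[OF limitin_flow[OF r(2) assms(3)]] Hausdorff by simp
  ultimately show ?thesis by blast
qed

definition invariant_part :: "'a set \<Rightarrow> 'a set" where
  "invariant_part C = {z \<in> C. \<forall>t\<ge>0. z \<in> Phi t ` C}"

lemma invariant_part_maximal:
  assumes "S \<subseteq> C" "\<And>t. 0 \<le> t \<Longrightarrow> S \<subseteq> Phi t ` S"
  shows "S \<subseteq> invariant_part C"
  using assms unfolding invariant_part_def by blast

context
  fixes C :: "'a set"
  assumes closed: "closedin T C"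
    and forward: "\<And>z t. z \<in> C \<Longrightarrow> 0 \<le> t \<Longrightarrow> Phi t z \<in> C"
begin

lemma invariant_part_forward:
  assumes "z \<in> invariant_part C" "0 \<le> t"
  shows "Phi t z \<in> invariant_part C"
proof -
  have zC: "z \<in> C" and pre: "\<And>s. 0 \<le> s \<Longrightarrow> z \<in> Phi s ` C"
    using assms(1) unfolding invariant_part_def by auto
  have "Phi t z \<in> Phi s ` C" if s: "0 \<le> s" for s
  proof -
    obtain u where u: "u \<in> C" "z = Phi s u" using pre[OF s] by blast
    have "u \<in> topspace T" using u(1) closedin_subset[OF closed] by blast
    then have "Phi t z = Phi s (Phi t u)"
      unfolding u(2) by (rule flow_commute[OF _ s assms(2)])
    then show ?thesis using forward[OF u(1) assms(2)] by (rule image_eqI)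
  qed
  then show ?thesis using forward[OF zC assms(2)] unfolding invariant_part_def by blast
qed

lemma s_compact_invariant_part: "s_compact T (invariant_part C)"
  unfolding s_compact_def
proof (intro allI impI)
  fix z :: "nat \<Rightarrow> 'a" assume z: "\<forall>n. z n \<in> invariant_part C"
  then have "\<forall>n. z n \<in> C" unfolding invariant_part_def by blast
  moreover have "s_compact T C"
    using s_compact_closedin_subset[OF s_compact_space closed closedin_subset[OF closed]] .
  ultimately obtain r c where r: "strict_mono r" "c \<in> C" "limitin T (z \<circ> r) c sequentially"
    using \<open>s_compact T C\<close>[unfolded s_compact_def, rule_format, of z] by blast
  have "c \<in> Phi s ` C" if "0 \<le> s" for s
  proof (rule flow_image_closed_under_limits[OF closed that _ r(3)])
    show "(z \<circ> r) n \<in> Phi s ` C" for n using z that unfolding invariant_part_def by simp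
  qed
  then show "\<exists>r y. strict_mono r \<and> y \<in> invariant_part C \<and> limitin T (z \<circ> r) y sequentially"
    using r unfolding invariant_part_def by blast
qed

(* Preimages u n of z under Phi (t + n), pushed forward by time n, accumulate at a preimage of z
   under Phi t that lies in every Phi s ` C. *)
lemma invariant_part_backward:
  assumes "z \<in> invariant_part C" "0 \<le> t"
  shows "\<exists>v\<in>invariant_part C. Phi t v = z"
proof -
  have CT: "C \<subseteq> topspace T" using closedin_subset[OF closed] by blast
  have "z \<in> Phi s ` C" if "0 \<le> s" for s
    using assms(1) that unfolding invariant_part_def by blast
  then have "\<forall>n::nat. \<exists>u. u \<in> C \<and> z = Phi (t + real n) u"
    using assms(2) by (metis add_nonneg_nonneg imageE of_nat_0_le_iff)
  then obtain u where u: "\<And>n. u n \<in> C" "\<And>n. z = Phi (t + real n) (u n)"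
    by (metis (mono_tags))
  define v where "v n = Phi (real n) (u n)" for n
  have v_z: "Phi t (v n) = z" for n
    using semigroup[OF subsetD[OF CT u(1)], of "real n" t] assms(2) u(2)[of n]
    by (simp add: v_def)
  have v_image: "v n \<in> Phi s ` C" if "0 \<le> s" "s \<le> real n" for n s
  proof -
    have "v n = Phi s (Phi (real n - s) (u n))"
      using semigroup[OF subsetD[OF CT u(1)], of "real n - s" s] that by (simp add: v_def)
    then show ?thesis using forward[OF u(1)] that by (intro image_eqI) auto
  qed
  have "\<forall>n. v n \<in> topspace T"
    by (simp add: v_def flow_in_topspace subsetD[OF CT u(1)])
  then obtain r c where r: "strict_mono r" "limitin T (v \<circ> r) c sequentially"
    using s_compact_space[unfolded s_compact_def, rule_format, of v] by blast
  have c_image: "c \<in> Phi s ` C" if s: "0 \<le> s" for s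
  proof -
    obtain M :: nat where M: "s \<le> real M" using real_arch_simple by blast
    have "M \<le> r (n + M)" for n using seq_suble[OF r(1), of "n + M"] by simp
    then have "s \<le> real (r (n + M))" for n using M of_nat_le_iff order_trans by blast
    then have "(v \<circ> r \<circ> (\<lambda>n. n + M)) n \<in> Phi s ` C" for n
      using v_image[OF s] by simp
    then show ?thesis
      using flow_image_closed_under_limits[OF closed s]
        limitin_subsequence[OF strict_mono_add r(2)] by blast
  qed
  have "c \<in> C" using c_image[of 0] forward by auto
  then have "c \<in> invariant_part C" using c_image unfolding invariant_part_def by blast
  moreover have "limitin T (Phi t \<circ> (v \<circ> r)) z sequentially"
    using v_z assms(1) CT unfolding invariant_part_def by (auto simp: o_def)
  then have "Phi t c = z"
    using limitin_Hausdorff_unique[OF limitin_flow[OF r(2) assms(2)]] Hausdorff by simp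
  ultimately show ?thesis by blast
qed

lemma sf_invariant_invariant_part: "sf_invariant D Phi (invariant_part C)"
proof -
  have "invariant_part C \<subseteq> topspace T"
    using closedin_subset[OF closed] unfolding invariant_part_def by blast
  moreover have "Phi t ` invariant_part C = invariant_part C" if "0 \<le> t" for t
    using invariant_part_forward[OF _ that] invariant_part_backward[OF _ that] by blast
  ultimately show ?thesis by (simp add: sf_invariant_iff)
qed

end

end

locale semiflow_attractor = global_semiflow +
  fixes A N :: "'a set"
  assumes regular: "regular_space T"
    and attractor_s_compact: "s_compact T A"
    and attractor_invariant: "sf_invariant D Phi A"
    and nbhd: "nbhd_of T N A"
    and nbhd_attracted: "sf_attracts T D Phi A N"
    and maximal: "\<And>K. K \<subseteq> N \<Longrightarrow> s_compact T K \<Longrightarrow> sf_invariant D Phi K \<Longrightarrow> K \<subseteq> A"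
begin

definition region_of_attraction :: "'a set" where
  "region_of_attraction = {x \<in> topspace T. sf_attracts T D Phi A {x}}"

lemma attractor_subset_topspace: "A \<subseteq> topspace T"
  using s_compact_subset_topspace[OF attractor_s_compact] .

lemma closure_subset_interior_nbhd: "T closure_of A \<subseteq> T interior_of N"
  using nbhd unfolding nbhd_of_def by blast

lemma closure_subset_nbhd: "T closure_of A \<subseteq> N"
  using closure_subset_interior_nbhd interior_of_subset[of T N] by (rule order_trans)

lemma closure_forward_invariant:
  assumes "z \<in> T closure_of A" "0 \<le> t"
  shows "Phi t z \<in> T closure_of A"
proof -
  have "Phi t ` (T closure_of A) \<subseteq> T closure_of (Phi t ` A)"
    by (rule continuous_map_image_closure_subset[OF continuous[OF assms(2)]])
  also have "Phi t ` A = A"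
    using attractor_invariant assms(2)
    unfolding sf_invariant_iff[OF attractor_subset_topspace] by blast
  finally show ?thesis using assms(1) by blast
qed

lemma invariant_part_closure_subset_attractor: "invariant_part (T closure_of A) \<subseteq> A"
proof (rule maximal)
  show "invariant_part (T closure_of A) \<subseteq> N"
    using closure_subset_nbhd unfolding invariant_part_def by blast
  show "s_compact T (invariant_part (T closure_of A))"
    by (rule s_compact_invariant_part) (simp_all add: closure_forward_invariant)
  show "sf_invariant D Phi (invariant_part (T closure_of A))"
    by (rule sf_invariant_invariant_part) (simp_all add: closure_forward_invariant)
qed

lemma nbhd_subset_region_of_attraction: "N \<subseteq> region_of_attraction"
  using nbhd sf_attracts_subset[OF nbhd_attracted]
  unfolding region_of_attraction_def nbhd_of_def by blast

lemma closure_subset_region_of_attraction: "T closure_of A \<subseteq> region_of_attraction"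
  using closure_subset_nbhd nbhd_subset_region_of_attraction by blast

lemma region_of_attraction_eventually_in:
  "z \<in> region_of_attraction \<Longrightarrow> nbhd_of T V A \<Longrightarrow> \<exists>t0>0. \<forall>t>t0. Phi t z \<in> V"
  unfolding region_of_attraction_def using sf_attracts_eventually_in by fastforce

lemma separation_from_closure:
  assumes "z \<in> topspace T" "z \<notin> T closure_of A"
  shows "\<exists>U W. openin T W \<and> z \<in> W \<and> disjnt U W \<and> nbhd_of T U A"
proof -
  obtain W U where WU: "openin T W" "openin T U" "z \<in> W" "T closure_of A \<subseteq> U" "disjnt W U"
    using regular[unfolded regular_space_def, rule_format, of "T closure_of A" z] assms by auto
  have "nbhd_of T U A"
    unfolding nbhd_of_def interior_of_openin[OF WU(2)] using openin_subset[OF WU(2)] WU(4) by blast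
  with WU show ?thesis using disjnt_sym by blast
qed

lemma in_closure_if_in_all_nbhds:
  assumes "z \<in> topspace T" "\<And>V. nbhd_of T V A \<Longrightarrow> z \<in> V"
  shows "z \<in> T closure_of A"
  using separation_from_closure[OF assms(1)] assms(2) by (auto simp: disjnt_iff)

context
  fixes \<gamma> :: "real \<Rightarrow> 'a"
  assumes solution: "full_solution T D Phi \<gamma>"
begin

lemma solution_in_topspace: "\<gamma> t \<in> topspace T"
  using solution unfolding full_solution_iff by blast

lemma solution_flow: "s \<le> t \<Longrightarrow> \<gamma> t = Phi (t - s) (\<gamma> s)"
  using solution unfolding full_solution_iff by blast

lemma omega_limit_subset_closure:
  assumes "\<gamma> s \<in> region_of_attraction"
  shows "omega_limit T \<gamma> \<subseteq> T closure_of A"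
proof
  fix y assume "y \<in> omega_limit T \<gamma>"
  then obtain tn where tn: "filterlim tn at_top sequentially" "limitin T (\<gamma> \<circ> tn) y sequentially"
    unfolding omega_limit_def by blast
  show "y \<in> T closure_of A"
  proof (rule ccontr)
    assume "y \<notin> T closure_of A"
    then obtain U W where UW: "openin T W" "y \<in> W" "disjnt U W" "nbhd_of T U A"
      using separation_from_closure limitin_topspace[OF tn(2)] by blast
    obtain t0 where t0: "t0 > 0" "\<forall>t>t0. Phi t (\<gamma> s) \<in> U"
      using region_of_attraction_eventually_in[OF assms UW(4)] by blast
    have "eventually (\<lambda>n. \<gamma> (tn n) \<in> W) sequentially"
      using tn(2) UW(1,2) unfolding limitin_def by auto
    moreover have "eventually (\<lambda>n. s + t0 < tn n) sequentially"
      using tn(1) filterlim_at_top_dense by blast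
    ultimately obtain n where n: "\<gamma> (tn n) \<in> W" "s + t0 < tn n"
      using eventually_happens'[OF sequentially_bot] eventually_conj by blast
    have "\<gamma> (tn n) \<in> U"
      using solution_flow[of s "tn n"] n(2) t0 by simp
    with n(1) UW(3) show False by (auto simp: disjnt_iff)
  qed
qed

lemma omega_limit_subset_attractor:
  assumes "\<gamma> s \<in> region_of_attraction"
  shows "omega_limit T \<gamma> \<subseteq> A"
proof -
  have "omega_limit T \<gamma> \<subseteq> invariant_part (T closure_of A)"
  proof (rule invariant_part_maximal)
    show "omega_limit T \<gamma> \<subseteq> T closure_of A"
      by (rule omega_limit_subset_closure[OF assms])
    show "omega_limit T \<gamma> \<subseteq> Phi t ` omega_limit T \<gamma>" if "0 \<le> t" for t
      using omega_limit_backward_invariant[OF solution _ that] by blast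
  qed
  then show ?thesis using invariant_part_closure_subset_attractor by blast
qed

lemma range_subset_attractor_if_in_closure:
  assumes "range \<gamma> \<subseteq> T closure_of A"
  shows "range \<gamma> \<subseteq> A"
proof -
  have "range \<gamma> \<subseteq> invariant_part (T closure_of A)"
  proof (rule invariant_part_maximal[OF assms])
    show "range \<gamma> \<subseteq> Phi t ` range \<gamma>" if "0 \<le> t" for t
    proof
      fix w assume "w \<in> range \<gamma>"
      then obtain s where "w = \<gamma> s" by blast
      then have "w = Phi t (\<gamma> (s - t))" using solution_flow[of "s - t" s] that by simp
      then show "w \<in> Phi t ` range \<gamma>" by blast
    qed
  qed
  then show ?thesis using invariant_part_closure_subset_attractor by blast
qed

lemma range_subset_closure_if_returns_to_nbhd:
  assumes "\<And>s. \<exists>t\<le>s. \<gamma> t \<in> N"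
  shows "range \<gamma> \<subseteq> T closure_of A"
proof
  fix w assume "w \<in> range \<gamma>"
  then obtain s where s: "w = \<gamma> s" by blast
  show "w \<in> T closure_of A"
  proof (rule in_closure_if_in_all_nbhds)
    show "w \<in> topspace T" using s solution_in_topspace by simp
  next
    fix V assume "nbhd_of T V A"
    then obtain t0 where t0: "t0 > 0" "\<forall>t>t0. \<forall>z\<in>N. Phi t z \<in> V"
      using sf_attracts_eventually_in[OF nbhd_attracted] by blast
    obtain t where t: "t \<le> s - t0 - 1" "\<gamma> t \<in> N" using assms by blast
    have "w = Phi (s - t) (\<gamma> t)" using s solution_flow[of t s] t(1) t0(1) by simp
    then show "w \<in> V" using t0(2) t by simp
  qed
qed

lemma range_subset_attractor_if_alpha_limit_attracted:
  assumes "y \<in> alpha_limit T \<gamma>" "y \<in> region_of_attraction"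
  shows "range \<gamma> \<subseteq> A"
proof -
  obtain tn where tn: "filterlim tn at_bot sequentially" "limitin T (\<gamma> \<circ> tn) y sequentially"
    using assms(1) unfolding alpha_limit_def by blast
  have "nbhd_of T (T interior_of N) A"
    using closure_subset_interior_nbhd unfolding nbhd_of_def by (simp add: interior_of_subset_topspace)
  then obtain t0 where t0: "t0 > 0" "\<forall>t>t0. Phi t y \<in> T interior_of N"
    using region_of_attraction_eventually_in[OF assms(2)] by blast
  define \<tau> where "\<tau> = t0 + 1"
  have \<tau>: "0 \<le> \<tau>" "Phi \<tau> y \<in> T interior_of N" using t0 unfolding \<tau>_def by auto
  have near: "eventually (\<lambda>n. Phi \<tau> (\<gamma> (tn n)) \<in> T interior_of N) sequentially"
    using limitin_flow[OF tn(2) \<tau>(1)] \<tau>(2) unfolding limitin_def by auto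
  have "\<exists>t\<le>s. \<gamma> t \<in> N" for s
  proof -
    have "eventually (\<lambda>n. tn n < s - \<tau>) sequentially"
      using tn(1) filterlim_at_bot_dense by blast
    then obtain n where n: "Phi \<tau> (\<gamma> (tn n)) \<in> T interior_of N" "tn n < s - \<tau>"
      using eventually_happens'[OF sequentially_bot] eventually_conj[OF near] by blast
    have "\<gamma> (tn n + \<tau>) = Phi \<tau> (\<gamma> (tn n))"
      using solution_flow[of "tn n" "tn n + \<tau>"] \<tau>(1) by simp
    then show ?thesis
      using n interior_of_subset[of T N] by (intro exI[of _ "tn n + \<tau>"]) auto
  qed
  then show ?thesis
    using range_subset_attractor_if_in_closure range_subset_closure_if_returns_to_nbhd by blast
qed

theorem full_solution_limit_sets:
  defines "R \<equiv> topspace T - region_of_attraction"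
  shows "(omega_limit T \<gamma> \<inter> R \<noteq> {} \<longrightarrow> range \<gamma> \<subseteq> R) \<and>
         (alpha_limit T \<gamma> \<inter> T closure_of A \<noteq> {} \<longrightarrow> range \<gamma> \<subseteq> A) \<and>
         (\<gamma> 0 \<in> topspace T - (A \<union> R) \<longrightarrow> alpha_limit T \<gamma> \<subseteq> R \<and> omega_limit T \<gamma> \<subseteq> A)"
proof (intro conjI impI)
  assume meets: "omega_limit T \<gamma> \<inter> R \<noteq> {}"
  have "\<gamma> s \<in> R" for s
  proof (rule ccontr)
    assume "\<gamma> s \<notin> R"
    then have "\<gamma> s \<in> region_of_attraction" using solution_in_topspace unfolding R_def by blast
    then have "omega_limit T \<gamma> \<subseteq> region_of_attraction"
      using omega_limit_subset_closure closure_subset_region_of_attraction by blast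
    with meets show False unfolding R_def by blast
  qed
  then show "range \<gamma> \<subseteq> R" by blast
next
  assume "alpha_limit T \<gamma> \<inter> T closure_of A \<noteq> {}"
  then obtain y where y: "y \<in> alpha_limit T \<gamma>" "y \<in> T closure_of A" by blast
  then show "range \<gamma> \<subseteq> A"
    using range_subset_attractor_if_alpha_limit_attracted closure_subset_region_of_attraction
    by blast
next
  assume \<gamma>0: "\<gamma> 0 \<in> topspace T - (A \<union> R)"
  show "alpha_limit T \<gamma> \<subseteq> R"
  proof
    fix y assume y: "y \<in> alpha_limit T \<gamma>"
    have "y \<notin> region_of_attraction"
      using range_subset_attractor_if_alpha_limit_attracted[OF y] \<gamma>0 by blast
    then show "y \<in> R" using y alpha_limit_subset_topspace[of T \<gamma>] unfolding R_def by blast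
  qed
  show "omega_limit T \<gamma> \<subseteq> A"
    using omega_limit_subset_attractor[of 0] \<gamma>0 unfolding R_def by blast
qed

end

end

lemma global_semiflow_on_attractor:
  assumes "Hausdorff_space X" "local_semiflow X D Phi" "sf_attractor X D Phi \<A>"
  shows "global_semiflow (subtopology X \<A>) (sf_restrict D \<A>) Phi"
proof -
  have s_compact: "s_compact X \<A>" using assms(3) unfolding sf_attractor_def by blast
  then have top: "topspace (subtopology X \<A>) = \<A>"
    using s_compact_subset_topspace[OF s_compact] by (simp add: Int_absorb1)
  have semiflow: "\<forall>x t s. 0 \<le> t \<and> 0 \<le> s \<and> (t + s, x) \<in> D \<longrightarrow>
      (s, x) \<in> D \<and> (t, Phi s x) \<in> D \<and> Phi (t + s) x = Phi t (Phi s x)"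
    using assms(2) unfolding local_semiflow_def by (elim conjE)
  show ?thesis
  proof
    show "{0..} \<times> topspace (subtopology X \<A>) \<subseteq> sf_restrict D \<A>"
      using sf_attractor_domain[OF assms(3)] unfolding top sf_restrict_def by auto
    show "continuous_map (subtopology X \<A>) (subtopology X \<A>) (Phi t)" if "0 \<le> t" for t
      using continuous_map_sf_attractor[OF assms(2,3) that] .
    show "Phi (t + s) z = Phi t (Phi s z)"
      if "z \<in> topspace (subtopology X \<A>)" "0 \<le> s" "0 \<le> t" for z s t
    proof -
      have "(t + s, z) \<in> D" using sf_attractor_domain[OF assms(3), of z "t + s"] that top by simp
      then show ?thesis using semiflow[rule_format, of t s z] that by simp
    qed
    show "Hausdorff_space (subtopology X \<A>)"
      using Hausdorff_space_subtopology[OF assms(1)] .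
    show "s_compact (subtopology X \<A>) (topspace (subtopology X \<A>))"
      unfolding top using s_compact_subtopology_self[OF assms(1) s_compact] .
  qed
qed

lemma semiflow_attractor_on_attractor:
  assumes "normal_space X" "Hausdorff_space X" "local_semiflow X D Phi"
    "sf_attractor X D Phi \<A>" "sf_attractor_in X D Phi \<A> A"
  shows "\<exists>N. semiflow_attractor (subtopology X \<A>) (sf_restrict D \<A>) Phi A N"
proof -
  have "regular_space (subtopology X \<A>)"
    using assms(1,2)
    by (intro regular_space_subtopology normal_t1_imp_regular_space Hausdorff_imp_t1_space)
  moreover obtain N where "s_compact (subtopology X \<A>) A"
    "sf_invariant (sf_restrict D \<A>) Phi A" "nbhd_of (subtopology X \<A>) N A"
    "sf_attracts (subtopology X \<A>) (sf_restrict D \<A>) Phi A N"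
    "\<And>K. K \<subseteq> N \<Longrightarrow> s_compact (subtopology X \<A>) K \<Longrightarrow>
      sf_invariant (sf_restrict D \<A>) Phi K \<Longrightarrow> K \<subseteq> A"
    using assms(5) unfolding sf_attractor_in_def sf_attractor_def by blast
  ultimately have "semiflow_attractor (subtopology X \<A>) (sf_restrict D \<A>) Phi A N"
    by (intro semiflow_attractor.intro[OF global_semiflow_on_attractor[OF assms(2-4)]]
        semiflow_attractor_axioms.intro)
  then show ?thesis by blast
qed

lemma full_solution_subtopology:
  assumes "full_solution X D Phi \<gamma>" "range \<gamma> \<subseteq> S"
  shows "full_solution (subtopology X S) (sf_restrict D S) Phi \<gamma>"
  using assms unfolding full_solution_def sf_restrict_def by auto

theorem proposition6p2:
  fixes X :: "'a topology" and D :: "(real \<times> 'a) set" and Phi :: "real \<Rightarrow> 'a \<Rightarrow> 'a"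
    and \<A> A :: "'a set" and \<gamma> :: "real \<Rightarrow> 'a" and x :: 'a
  assumes "normal_space X" and "Hausdorff_space X"
    and "local_semiflow X D Phi"
    and "sf_attractor X D Phi \<A>"
    and "sf_attractor_in X D Phi \<A> A"
    and "full_solution X D Phi \<gamma>"
    and "range \<gamma> \<subseteq> \<A>"
    and "\<gamma> 0 = x"
  defines "Astar \<equiv> \<A> - region_of_attraction_in X D Phi \<A> A"
  shows "(omega_limit X \<gamma> \<inter> Astar \<noteq> {} \<longrightarrow> range \<gamma> \<subseteq> Astar) \<and>
         (alpha_limit X \<gamma> \<inter> (subtopology X \<A>) closure_of A \<noteq> {} \<longrightarrow> range \<gamma> \<subseteq> A) \<and>
         (x \<in> \<A> - (A \<union> Astar) \<longrightarrow> alpha_limit X \<gamma> \<subseteq> Astar \<and> omega_limit X \<gamma> \<subseteq> A)"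
proof -
  define T where "T = subtopology X \<A>"
  have s_compact: "s_compact X \<A>" using assms(4) unfolding sf_attractor_def by blast
  then have top: "topspace T = \<A>"
    unfolding T_def using s_compact_subset_topspace[OF s_compact] by (simp add: Int_absorb1)
  obtain N where "semiflow_attractor T (sf_restrict D \<A>) Phi A N"
    using semiflow_attractor_on_attractor[OF assms(1-5)] unfolding T_def by blast
  then interpret semiflow_attractor T "sf_restrict D \<A>" Phi A N .
  have "region_of_attraction = region_of_attraction_in X D Phi \<A> A"
    unfolding region_of_attraction_def top unfolding region_of_attraction_in_def T_def ..
  then have Astar: "Astar = topspace T - region_of_attraction"
    unfolding Astar_def top by simp
  have omega: "omega_limit X \<gamma> = omega_limit T \<gamma>"
    unfolding T_def
    by (rule omega_limit_subtopology_s_compact[OF assms(2) s_compact assms(7), symmetric])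
  have alpha: "alpha_limit X \<gamma> = alpha_limit T \<gamma>"
    unfolding T_def
    by (rule alpha_limit_subtopology_s_compact[OF assms(2) s_compact assms(7), symmetric])
  show ?thesis
    using full_solution_limit_sets[OF full_solution_subtopology[OF assms(6,7), folded T_def]]
    unfolding Astar omega alpha T_def[symmetric] top assms(8) .
qed

end
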